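(* Let $\mathbf g:\mathbb{R}^{d_{\mathrm{input}}}\to\mathbb{R}^M$ be an $\ell_\infty$-dist net (as defined in the context) and let $f(\mathbf x)=\arg\max_{i\in\{1,\dots,M\}} g_i(\mathbf x)$. Let $(\mathbf x,y)$ be such that $\mathbf x$ is correctly classified, i.e. $f(\mathbf x)=y$, and let $\mathrm{margin}(\mathbf x;\mathbf g)$ denote the difference between the largest and the second-largest entries of $\mathbf g(\mathbf x)$. Then for every $\mathbf x'$ with $\|\mathbf x-\mathbf x'\|_\infty<\mathrm{margin}(\mathbf x;\mathbf g)/2$ we have $f(\mathbf x')=f(\mathbf x)$. Consequently the robust radius satisfies $R(f;\mathbf x,y)\ge \mathrm{margin}(\mathbf x;\mathbf g)/2$, i.e. $\mathrm{margin}(\mathbf x;\mathbf g)/2$ is a valid certified radius at $(\mathbf x,y)$.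
   Context: An $L$-layer $\ell_\infty$-dist net takes $\mathbf x^{(0)}=\mathbf x\in\mathbb{R}^{d_{\mathrm{input}}}$ and computes, for $1\le l\le L$, $1\le k\le d_l$, $x^{(l)}_k=\|\mathbf x^{(l-1)}-\mathbf w^{(l,k)}\|_\infty+b^{(l,k)}$ with arbitrary real parameters $\mathbf w^{(l,k)}$, $b^{(l,k)}$; with $d_L=M$ its output is $\mathbf g(\mathbf x)=(-x^{(L)}_1,\dots,-x^{(L)}_M)$. For a classifier $f$ and labeled point $(\mathbf x,y)$, the robust radius is $R(f;\mathbf x,y)=\inf_{f(\mathbf x')\ne f(\mathbf x)}\|\mathbf x'-\mathbf x\|_\infty$ if $f(\mathbf x)=y$ and $0$ otherwise; a certified radius is any lower bound on $R(f;\mathbf x,y)$. *)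

theory Defs
  imports Complex_Main "HOL-Library.Extended_Real"
begin

text \<open>Vectors in R^n are represented as functions nat => real that vanish at indices >= n.\<close>

definition vec_space :: "nat \<Rightarrow> (nat \<Rightarrow> real) set" where
  "vec_space n = {v. \<forall>i\<ge>n. v i = 0}"

definition linf_dist :: "nat \<Rightarrow> (nat \<Rightarrow> real) \<Rightarrow> (nat \<Rightarrow> real) \<Rightarrow> real" where
  "linf_dist n u v = Max (insert 0 ((\<lambda>i. \<bar>u i - v i\<bar>) ` {..<n}))"

text \<open>A layer is (output width d_l, weights k |-> w^(l,k), biases k |-> b^(l,k)).\<close>
type_synonym layer = "nat \<times> (nat \<Rightarrow> nat \<Rightarrow> real) \<times> (nat \<Rightarrow> real)"

text \<open>Forward pass: x^(l)_k = ||x^(l-1) - w^(l,k)||_inf + b^(l,k), for k < d_l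
  (coordinates >= d_l set to 0). First argument is the width of the current input.\<close>
fun dist_forward :: "nat \<Rightarrow> layer list \<Rightarrow> (nat \<Rightarrow> real) \<Rightarrow> (nat \<Rightarrow> real)" where
  "dist_forward d [] x = x"
| "dist_forward d ((k, W, b) # ls) x =
     dist_forward k ls (\<lambda>j. if j < k then linf_dist d x (W j) + b j else 0)"

definition dist_net :: "nat \<Rightarrow> layer list \<Rightarrow> (nat \<Rightarrow> real) \<Rightarrow> (nat \<Rightarrow> real)" where
  "dist_net d ls x = (\<lambda>i. - dist_forward d ls x i)"

definition is_dist_net :: "layer list \<Rightarrow> nat \<Rightarrow> bool" where
  "is_dist_net ls M \<longleftrightarrow> ls \<noteq> [] \<and> fst (last ls) = M"

text \<open>Margin of a vector v in R^M (M >= 2): largest entry minus second-largest entry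
  (the maximum over all indices other than one index attaining the maximum).\<close>
definition top_index :: "nat \<Rightarrow> (nat \<Rightarrow> real) \<Rightarrow> nat" where
  "top_index M v = (LEAST i. i < M \<and> (\<forall>j<M. v j \<le> v i))"

definition margin :: "nat \<Rightarrow> (nat \<Rightarrow> real) \<Rightarrow> real" where
  "margin M v = Max (v ` {..<M}) - Max (v ` ({..<M} - {top_index M v}))"

text \<open>Robust radius of classifier f at (x,y) in R^d (infimum over the empty set is +infinity).\<close>
definition robust_radius :: "nat \<Rightarrow> ((nat \<Rightarrow> real) \<Rightarrow> nat) \<Rightarrow> (nat \<Rightarrow> real) \<Rightarrow> nat \<Rightarrow> ereal" where
  "robust_radius d f x y =
     (if f x = y then (INF x' \<in> {x' \<in> vec_space d. f x' \<noteq> f x}. ereal (linf_dist d x' x)) else 0)"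

end

theory Submission
  imports Defs
begin

text \<open>Each neuron \<open>x \<mapsto> \<parallel>x - w\<parallel>\<^sub>\<infinity> + b\<close> is 1-Lipschitz for the \<open>\<ell>\<^sub>\<infinity>\<close>-distance by the
  triangle inequality, so by induction over the layers every output score of an
  \<open>\<ell>\<^sub>\<infinity>\<close>-dist net is 1-Lipschitz in the input. Moving the input by \<open>\<delta>\<close> thus changes the gap
  between the top score and any other score by at most \<open>2\<delta>\<close>, so no other class can overtake
  the top one while \<open>2\<delta>\<close> is below the margin.\<close>

lemma abs_diff_le_linf_dist: "i < n \<Longrightarrow> \<bar>u i - v i\<bar> \<le> linf_dist n u v"
  unfolding linf_dist_def by (intro Max_ge) auto

lemma linf_dist_nonneg: "0 \<le> linf_dist n u v"
  unfolding linf_dist_def by (intro Max_ge) auto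

lemma linf_dist_le:
  assumes "\<And>i. i < n \<Longrightarrow> \<bar>u i - v i\<bar> \<le> c" and "0 \<le> c"
  shows "linf_dist n u v \<le> c"
  unfolding linf_dist_def using assms by (subst Max_le_iff) auto

lemma linf_dist_self: "linf_dist n u u = 0"
  using linf_dist_le[of n u u 0] linf_dist_nonneg[of n u u] by simp

lemma linf_dist_commute: "linf_dist n u v = linf_dist n v u"
  unfolding linf_dist_def by (simp add: abs_minus_commute)

lemma linf_dist_triangle: "linf_dist n u w \<le> linf_dist n u v + linf_dist n v w"
proof (rule linf_dist_le)
  fix i assume "i < n"
  then show "\<bar>u i - w i\<bar> \<le> linf_dist n u v + linf_dist n v w"
    using abs_diff_le_linf_dist[of i n u v] abs_diff_le_linf_dist[of i n v w] by linarith
qed (use linf_dist_nonneg[of n u v] linf_dist_nonneg[of n v w] in linarith)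

lemma abs_linf_dist_diff_le: "\<bar>linf_dist n u w - linf_dist n v w\<bar> \<le> linf_dist n u v"
  using linf_dist_triangle[of n u w v] linf_dist_triangle[of n v w u] linf_dist_commute[of n u v]
  by linarith

text \<open>The hypothesis \<open>ls \<noteq> []\<close> is needed: the empty net is the identity, which also
  passes on the coordinates \<open>\<ge> d\<close> that the distance ignores.\<close>

lemma abs_dist_forward_diff_le:
  "ls \<noteq> [] \<Longrightarrow> \<bar>dist_forward d ls x i - dist_forward d ls x' i\<bar> \<le> linf_dist d x x'"
proof (induction ls arbitrary: d x x' i)
  case Nil
  then show ?case by simp
next
  case (Cons l ls)
  obtain k W b where l: "l = (k, W, b)" by (cases l) auto
  define u where "u = (\<lambda>j. if j < k then linf_dist d x (W j) + b j else 0)"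
  define v where "v = (\<lambda>j. if j < k then linf_dist d x' (W j) + b j else 0)"
  have forward: "dist_forward d (l # ls) x = dist_forward k ls u"
    "dist_forward d (l # ls) x' = dist_forward k ls v"
    by (simp_all add: l u_def v_def)
  have layer: "\<bar>u j - v j\<bar> \<le> linf_dist d x x'" for j
    using abs_linf_dist_diff_le[of d x "W j" x'] linf_dist_nonneg[of d x x']
    by (auto simp: u_def v_def)
  show ?case
  proof (cases "ls = []")
    case True
    show ?thesis unfolding forward using layer True by simp
  next
    case False
    have "\<bar>dist_forward k ls u i - dist_forward k ls v i\<bar> \<le> linf_dist k u v"
      using Cons.IH[OF False] .
    also have "\<dots> \<le> linf_dist d x x'"
      using layer linf_dist_nonneg[of d x x'] by (intro linf_dist_le)
    finally show ?thesis unfolding forward .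
  qed
qed

lemma abs_dist_net_diff_le:
  "ls \<noteq> [] \<Longrightarrow> \<bar>dist_net d ls x i - dist_net d ls x' i\<bar> \<le> linf_dist d x x'"
  using abs_dist_forward_diff_le[of ls d x i x'] by (simp add: dist_net_def)

lemma top_index:
  assumes "\<exists>i<M. \<forall>j<M. v j \<le> v i"
  shows "top_index M v < M" and "\<forall>j<M. v j \<le> v (top_index M v)"
  using LeastI_ex[of "\<lambda>i. i < M \<and> (\<forall>j<M. v j \<le> v i)"] assms
  unfolding top_index_def by auto

lemma le_top_index_minus_margin:
  assumes "\<exists>i<M. \<forall>j<M. v j \<le> v i" and "j < M" and "j \<noteq> top_index M v"
  shows "v j \<le> v (top_index M v) - margin M v"
proof -
  have "Max (v ` {..<M}) = v (top_index M v)"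
    using top_index[OF assms(1)] by (intro Max_eqI) auto
  moreover have "v j \<le> Max (v ` ({..<M} - {top_index M v}))"
    using assms(2,3) by (intro Max_ge) auto
  ultimately show ?thesis unfolding margin_def by simp
qed

lemma argmax_eq_top_index_if_close:
  assumes v_max: "\<exists>i<M. \<forall>j<M. v j \<le> v i"
    and close: "\<And>j. j < M \<Longrightarrow> \<bar>v j - w j\<bar> \<le> e" and e: "e < margin M v / 2"
    and w_max: "i < M" "\<forall>j<M. w j \<le> w i"
  shows "i = top_index M v"
proof (rule ccontr)
  let ?t = "top_index M v"
  assume "i \<noteq> ?t"
  then have "v i \<le> v ?t - margin M v"
    using le_top_index_minus_margin[OF v_max \<open>i < M\<close>] by simp
  moreover have "w ?t \<le> w i" and "\<bar>v ?t - w ?t\<bar> \<le> e" and "\<bar>v i - w i\<bar> \<le> e"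
    using top_index(1)[OF v_max] w_max close by auto
  ultimately show False using e by linarith
qed

lemma robust_radius_ge:
  assumes "f x = y" and "\<And>x'. x' \<in> vec_space d \<Longrightarrow> f x' \<noteq> f x \<Longrightarrow> r \<le> linf_dist d x x'"
  shows "ereal r \<le> robust_radius d f x y"
  unfolding robust_radius_def using assms linf_dist_commute[of d x]
  by (auto intro: INF_greatest)

theorem fact2:
  fixes d M :: nat and ls :: "layer list" and f :: "(nat \<Rightarrow> real) \<Rightarrow> nat"
    and x :: "nat \<Rightarrow> real" and y :: nat
  assumes net: "is_dist_net ls M"
    and M2: "M \<ge> 2"
    and f_argmax: "\<forall>z. f z < M \<and> (\<forall>j<M. dist_net d ls z j \<le> dist_net d ls z (f z))"
    and x_in: "x \<in> vec_space d"
    and correct: "f x = y"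
  shows "(\<forall>x' \<in> vec_space d. linf_dist d x x' < margin M (dist_net d ls x) / 2 \<longrightarrow> f x' = f x)
       \<and> robust_radius d f x y \<ge> ereal (margin M (dist_net d ls x) / 2)"
proof -
  let ?g = "dist_net d ls" and ?m = "margin M (dist_net d ls x)"
  have "ls \<noteq> []" using net by (simp add: is_dist_net_def)
  have "\<exists>i<M. \<forall>j<M. ?g x j \<le> ?g x i" using f_argmax by blast
  then have top: "f x' = top_index M (?g x)" if "linf_dist d x x' < ?m / 2" for x'
    using argmax_eq_top_index_if_close[of M "?g x" "?g x'"] f_argmax that
      abs_dist_net_diff_le[OF \<open>ls \<noteq> []\<close>] by blast
  have "linf_dist d x x < ?m / 2" if "linf_dist d x x' < ?m / 2" for x'
    using that linf_dist_self[of d x] linf_dist_nonneg[of d x x'] by simp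
  then have stable: "\<forall>x' \<in> vec_space d. linf_dist d x x' < ?m / 2 \<longrightarrow> f x' = f x"
    using top by metis
  then have "ereal (?m / 2) \<le> robust_radius d f x y"
    using correct by (intro robust_radius_ge) (auto simp: not_less[symmetric])
  with stable show ?thesis by simp
qed

end
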